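(* Let $k\ge5$, $m\ge0$, $d\ge0$ be integers with $d$ divisible by $4$. If $$m\ge \min\left\{\left\lceil \frac{(k+2)(k-3)}{2k}\right\rceil,\ \left\lceil \sqrt{2k+\tfrac14}-\tfrac32\right\rceil\right\}-1,$$ then $d_{so}(N,k)=m2^{k-1}+d+2$ for every integer $N$ with $m(2^k-1)+g(k,d+2)+1\le N\le m(2^k-1)+g(k,d+4)-1$.
   Context: $g(k,d)=\sum_{i=0}^{k-1}\lceil d/2^i\rceil$. $d_{so}(n,k)$ denotes the largest minimum distance among all binary self-orthogonal $[n,k]$ codes (a code $C$ is self-orthogonal if $C\subseteq C^\perp$). *)

theory Defs
  imports Complex_Main
begin

text \<open>Binary vectors of length n are bool lists of length n (True = 1).\<close>

definition vadd :: "bool list \<Rightarrow> bool list \<Rightarrow> bool list" where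
  "vadd x y = map2 (\<noteq>) x y"

definition wt :: "bool list \<Rightarrow> nat" where
  "wt x = length (filter id x)"

definition orth :: "bool list \<Rightarrow> bool list \<Rightarrow> bool" where
  "orth x y = even (card {i. i < length x \<and> x ! i \<and> y ! i})"

definition lin_code :: "nat \<Rightarrow> nat \<Rightarrow> bool list set \<Rightarrow> bool" where
  "lin_code n k C \<longleftrightarrow> (\<forall>x\<in>C. length x = n) \<and> replicate n False \<in> C \<and>
     (\<forall>x\<in>C. \<forall>y\<in>C. vadd x y \<in> C) \<and> card C = 2 ^ k"

definition self_orth :: "bool list set \<Rightarrow> bool" where
  "self_orth C \<longleftrightarrow> (\<forall>x\<in>C. \<forall>y\<in>C. orth x y)"

definition so_code :: "nat \<Rightarrow> nat \<Rightarrow> bool list set \<Rightarrow> bool" where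
  "so_code n k C \<longleftrightarrow> lin_code n k C \<and> self_orth C"

definition min_dist :: "bool list set \<Rightarrow> nat" where
  "min_dist C = Min {wt x | x. x \<in> C \<and> x \<noteq> replicate (length x) False}"

definition d_so :: "nat \<Rightarrow> nat \<Rightarrow> nat" where
  "d_so n k = Max {min_dist C | C. so_code n k C}"

definition g :: "nat \<Rightarrow> nat \<Rightarrow> nat" where
  "g k d = (\<Sum>i<k. nat \<lceil>real d / 2 ^ i\<rceil>)"

end

theory Submission
  imports Defs "Berlekamp_Zassenhaus.Distinct_Degree_Factorization"
begin

(* Upper bound: weights in a self-orthogonal code are even, so a minimum distance above the even
   number D = m 2^(k-1) + d + 2 forces all nonzero weights to be at least D + 2, and the Griesmer
   bound then needs length g(k, D + 2) = m (2^k - 1) + g(k, d + 4) > N.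

   Lower bound: an anticode construction. Write d + 2 = q 2^(k-1) + 2^(k-1) - s with
   s = 2 + sum of 2^(k-1-c) over a set C of codimensions 1 <= c <= k - 3, and take M = m + q + 1
   copies of every nonzero column of GF(2)^k. Delete the column 1 twice and, for each c in C, the
   nonzero vectors of the subspace V_c of polynomials of degree < k divisible by an irreducible of
   degree c. A nonzero vector lies in at most m + 1 of the V_c, since the degrees of distinct
   irreducible factors sum to at most k - 1; this is where the hypothesis on m enters. Every
   codeword loses at most s from its weight M 2^(k-1), and all the pieces (GF(2)^k, the V_c, the
   doubled column) meet any two hyperplane sections evenly, so the code is self-orthogonal. *)

section \<open>Binary vectors\<close>

abbreviation zeros :: "nat \<Rightarrow> bool list" where
  "zeros n \<equiv> replicate n False"

definition vecs :: "nat \<Rightarrow> bool list set" where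
  "vecs k = {xs. length xs = k}"

fun dot :: "bool list \<Rightarrow> bool list \<Rightarrow> bool" where
  "dot (a # as) (b # bs) = ((a \<and> b) \<noteq> dot as bs)"
| "dot _ _ = False"

lemma vadd_Cons [simp]: "vadd (a # x) (b # y) = (a \<noteq> b) # vadd x y"
  by (simp add: vadd_def)

lemma vadd_Nil [simp]: "vadd [] y = []" "vadd x [] = []"
  by (auto simp: vadd_def)

lemma length_vadd [simp]: "length (vadd x y) = min (length x) (length y)"
  by (simp add: vadd_def)

lemma vadd_self [simp]: "vadd x x = zeros (length x)"
  by (induction x) auto

lemma vadd_zeros_right [simp]: "length x = n \<Longrightarrow> vadd x (zeros n) = x"
  by (induction x arbitrary: n) auto

lemma vadd_zeros_left [simp]: "length x = n \<Longrightarrow> vadd (zeros n) x = x"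
  by (induction x arbitrary: n) auto

lemma vadd_assoc: "vadd (vadd x y) z = vadd x (vadd y z)"
proof (induction x arbitrary: y z)
  case Nil
  then show ?case by simp
next
  case (Cons a x)
  then show ?case by (cases y; cases z) auto
qed

lemma vadd_eq_zeros_iff: "length x = length y \<Longrightarrow> vadd x y = zeros (length x) \<longleftrightarrow> x = y"
  by (induction x y rule: list_induct2) auto

lemma dot_comm: "dot u x = dot x u"
  by (induction u x rule: dot.induct) auto

lemma dot_vadd_right: "length x = length y \<Longrightarrow> dot u (vadd x y) = (dot u x \<noteq> dot u y)"
proof (induction x y arbitrary: u rule: list_induct2)
  case Nil
  then show ?case by simp
next
  case (Cons a x b y)
  then show ?case by (cases u) auto
qed

lemma dot_vadd_left: "length u = length v \<Longrightarrow> dot (vadd u v) x = (dot u x \<noteq> dot v x)"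
  using dot_vadd_right[of u v x] by (simp add: dot_comm)

lemma dot_zeros_left [simp]: "dot (zeros n) x = False"
  by (induction n arbitrary: x) (auto, metis dot.simps list.exhaust replicate_Suc)

lemma dot_zeros_right [simp]: "dot x (zeros n) = False"
  using dot_comm dot_zeros_left by metis

lemma wt_Nil [simp]: "wt [] = 0"
  by (simp add: wt_def)

lemma wt_Cons [simp]: "wt (a # x) = (if a then Suc (wt x) else wt x)"
  by (simp add: wt_def)

lemma wt_eq_0_iff: "wt x = 0 \<longleftrightarrow> x = zeros (length x)"
  by (induction x) auto

lemma wt_le_length: "wt x \<le> length x"
  unfolding wt_def by (rule length_filter_le)

lemma vecs_eq_lists: "vecs k = {xs. set xs \<subseteq> UNIV \<and> length xs = k}"
  unfolding vecs_def by auto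

lemma finite_vecs [simp]: "finite (vecs k)"
  using finite_lists_length_eq[of "UNIV :: bool set" k] by (simp add: vecs_eq_lists)

lemma card_vecs [simp]: "card (vecs k) = 2 ^ k"
  using card_lists_length_eq[of "UNIV :: bool set" k] by (simp add: vecs_eq_lists)

lemma zeros_in_vecs [simp]: "zeros k \<in> vecs k"
  by (simp add: vecs_def)

lemma vadd_in_vecs: "x \<in> vecs k \<Longrightarrow> y \<in> vecs k \<Longrightarrow> vadd x y \<in> vecs k"
  by (simp add: vecs_def)

section \<open>Codes given by column multiplicities\<close>

text \<open>A multiplicity function \<open>f\<close> on \<open>GF(2)^k\<close> describes the generator matrix with
  \<open>f x\<close> copies of each column \<open>x\<close>; \<open>encode k f u\<close> is the codeword of the message \<open>u\<close>.\<close>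

definition vecs_list :: "nat \<Rightarrow> bool list list" where
  "vecs_list k = (SOME xs. set xs = vecs k \<and> distinct xs)"

lemma vecs_list: "set (vecs_list k) = vecs k" "distinct (vecs_list k)"
proof -
  have "\<exists>xs. set xs = vecs k \<and> distinct xs"
    by (rule finite_distinct_list) simp
  then have "set (vecs_list k) = vecs k \<and> distinct (vecs_list k)"
    unfolding vecs_list_def by (rule someI_ex)
  then show "set (vecs_list k) = vecs k" "distinct (vecs_list k)" by auto
qed

definition columns :: "nat \<Rightarrow> (bool list \<Rightarrow> nat) \<Rightarrow> bool list list" where
  "columns k f = concat (map (\<lambda>x. replicate (f x) x) (vecs_list k))"

definition encode :: "nat \<Rightarrow> (bool list \<Rightarrow> nat) \<Rightarrow> bool list \<Rightarrow> bool list" where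
  "encode k f u = map (dot u) (columns k f)"

lemma length_filter_columns:
  "length (filter P (columns k f)) = (\<Sum>x\<in>vecs k. if P x then f x else 0)"
proof -
  have "length (filter P (concat (map (\<lambda>x. replicate (f x) x) xs)))
      = sum_list (map (\<lambda>x. if P x then f x else 0) xs)" for xs
    by (induction xs) auto
  then show ?thesis
    unfolding columns_def using vecs_list by (simp add: sum_list_distinct_conv_sum_set)
qed

lemma length_encode [simp]: "length (encode k f u) = (\<Sum>x\<in>vecs k. f x)"
  using length_filter_columns[of "\<lambda>_. True" k f] by (simp add: encode_def)

lemma wt_encode: "wt (encode k f u) = (\<Sum>x\<in>vecs k. if dot u x then f x else 0)"
  unfolding wt_def encode_def by (simp add: filter_map comp_def length_filter_columns)

lemma orth_encode:
  "orth (encode k f u) (encode k f v) \<longleftrightarrow> even (\<Sum>x\<in>vecs k. if dot u x \<and> dot v x then f x else 0)"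
proof -
  have "card {i. i < length (encode k f u) \<and> encode k f u ! i \<and> encode k f v ! i}
      = length (filter (\<lambda>x. dot u x \<and> dot v x) (columns k f))"
    unfolding length_filter_conv_card encode_def by (auto intro!: arg_cong[where f = card])
  then show ?thesis
    unfolding orth_def by (simp add: length_filter_columns)
qed

lemma vadd_encode:
  assumes "length u = length v"
  shows "vadd (encode k f u) (encode k f v) = encode k f (vadd u v)"
proof -
  have "vadd (map (dot u) cs) (map (dot v) cs) = map (\<lambda>c. dot u c \<noteq> dot v c) cs" for cs
    by (induction cs) auto
  then show ?thesis
    unfolding encode_def using assms by (simp add: dot_vadd_left)
qed

lemma encode_zeros: "encode k f (zeros k) = zeros (\<Sum>x\<in>vecs k. f x)"
proof -
  have "map (dot (zeros k)) xs = zeros (length xs)" for xs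
    by (induction xs) auto
  then show ?thesis
    using length_encode[of k f "zeros k"] by (simp add: encode_def)
qed

lemma lin_code_encode:
  assumes len: "(\<Sum>x\<in>vecs k. f x) = N"
    and pos: "\<And>u. u \<in> vecs k \<Longrightarrow> u \<noteq> zeros k \<Longrightarrow> wt (encode k f u) > 0"
  shows "lin_code N k (encode k f ` vecs k)"
proof -
  have inj: "inj_on (encode k f) (vecs k)"
  proof (rule inj_onI)
    fix u v
    assume u: "u \<in> vecs k" and v: "v \<in> vecs k" and eq: "encode k f u = encode k f v"
    have "encode k f (vadd u v) = zeros N"
      using vadd_encode[of u v k f] eq u v len by (simp add: vecs_def)
    then have "\<not> wt (encode k f (vadd u v)) > 0"
      by (simp add: wt_def)
    then have "vadd u v = zeros (length u)"
      using pos[of "vadd u v"] vadd_in_vecs[OF u v] u by (auto simp: vecs_def)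
    then show "u = v"
      using u v vadd_eq_zeros_iff[of u v] by (simp add: vecs_def)
  qed
  show ?thesis
    unfolding lin_code_def
  proof (intro conjI ballI)
    show "length x = N" if "x \<in> encode k f ` vecs k" for x
      using that len by auto
    show "zeros N \<in> encode k f ` vecs k"
      using encode_zeros[of k f] len by (metis zeros_in_vecs image_eqI)
    show "vadd x y \<in> encode k f ` vecs k" if "x \<in> encode k f ` vecs k" "y \<in> encode k f ` vecs k" for x y
      using that vadd_encode vadd_in_vecs by (auto simp: vecs_def)
    show "card (encode k f ` vecs k) = 2 ^ k"
      using card_image[OF inj] by simp
  qed
qed

section \<open>Counting in subspaces\<close>

definition bin_subspace :: "nat \<Rightarrow> bool list set \<Rightarrow> bool" where
  "bin_subspace k V \<longleftrightarrow> V \<subseteq> vecs k \<and> zeros k \<in> V \<and> (\<forall>x\<in>V. \<forall>y\<in>V. vadd x y \<in> V)"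

lemma bin_subspace_vecs: "bin_subspace k (vecs k)"
  unfolding bin_subspace_def by (auto intro: vadd_in_vecs)

lemma bin_subspace_finite: "bin_subspace k V \<Longrightarrow> finite V"
  unfolding bin_subspace_def by (meson finite_subset finite_vecs)

text \<open>Translation by a vector \<open>x0\<close> with \<open>dot u x0\<close> swaps the two sides of the hyperplane.\<close>

lemma card_dot_half:
  assumes V: "bin_subspace k V" and u: "length u = k" and x0: "x0 \<in> V" "dot u x0"
  shows "2 * card {x\<in>V. dot u x} = card V"
proof -
  let ?A = "{x\<in>V. dot u x}" and ?B = "{x\<in>V. \<not> dot u x}"
  have len: "\<And>x. x \<in> V \<Longrightarrow> length x = k"
    using V unfolding bin_subspace_def vecs_def by auto
  define h where "h x = vadd x x0" for x
  have hh: "h (h x) = x" if "x \<in> V" for x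
    unfolding h_def using len[OF that] len[OF x0(1)] by (simp add: vadd_assoc)
  have hV: "h x \<in> V" if "x \<in> V" for x
    unfolding h_def using V that x0 unfolding bin_subspace_def by auto
  have hdot: "dot u (h x) = (\<not> dot u x)" if "x \<in> V" for x
    unfolding h_def using len[OF that] len[OF x0(1)] x0(2) by (simp add: dot_vadd_right)
  have "bij_betw h ?A ?B"
    by (rule bij_betw_byWitness[where f' = h]) (use hh hV hdot in auto)
  then have "card ?A = card ?B"
    by (rule bij_betw_same_card)
  moreover have "card V = card ?A + card ?B"
    using bin_subspace_finite[OF V] by (subst card_Un_disjoint[symmetric]) (auto intro: arg_cong[where f = card])
  ultimately show ?thesis by simp
qed

lemma card_dot_cases:
  assumes V: "bin_subspace k V" and u: "length u = k" and cV: "card V = 2 ^ e" and e: "e \<ge> 1"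
  shows "card {x\<in>V. dot u x} = 0 \<or> card {x\<in>V. dot u x} = 2 ^ (e - 1)"
proof (cases "\<exists>x0\<in>V. dot u x0")
  case True
  then obtain x0 where "x0 \<in> V" "dot u x0" by blast
  from card_dot_half[OF V u this] cV have "2 * card {x\<in>V. dot u x} = 2 * 2 ^ (e - 1)"
    using e by (simp add: power_eq_if)
  then show ?thesis by simp
next
  case False
  then have "{x\<in>V. dot u x} = {}" by auto
  then show ?thesis by (metis card.empty)
qed

lemma card_dot_vecs:
  assumes u: "length u = k" and nz: "u \<noteq> zeros k"
  shows "card {x\<in>vecs k. dot u x} = 2 ^ (k - 1)"
proof -
  obtain i where i: "i < k" "u ! i"
    using u nz by (metis in_set_conv_nth replicate_eqI)
  define x0 where "x0 = (zeros k)[i := True]"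
  have "dot w ((zeros (length w))[i := True]) = w ! i" if "i < length w" for w :: "bool list" and i
    using that by (induction w arbitrary: i) (auto simp: nth_Cons' split: nat.splits)
  then have "dot u x0"
    unfolding x0_def using i u by auto
  moreover have "x0 \<in> vecs k"
    unfolding x0_def vecs_def by simp
  ultimately have "2 * card {x\<in>vecs k. dot u x} = 2 * 2 ^ (k - 1)"
    using card_dot_half[OF bin_subspace_vecs u] i by (simp add: power_eq_if)
  then show ?thesis by simp
qed

text \<open>Both hyperplane sections have size divisible by 4 once \<open>dim V \<ge> 3\<close>, and
  \<open>2 |A \<inter> B| + |A \<triangle> B| = |A| + |B|\<close>.\<close>

lemma even_card_dot_both:
  assumes V: "bin_subspace k V" and u: "length u = k" and v: "length v = k"
    and cV: "card V = 2 ^ e" and e: "e \<ge> 3"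
  shows "even (card {x\<in>V. dot u x \<and> dot v x})"
proof -
  have fin: "finite V" using bin_subspace_finite[OF V] .
  have four_dvd: "4 dvd card {x\<in>V. dot w x}" if "length w = k" for w
  proof -
    have "(2::nat) ^ (e - 1) = 4 * 2 ^ (e - 3)"
      using e by (simp add: power_add[symmetric] numeral_eq_Suc power_eq_if)
    then show ?thesis
      using card_dot_cases[OF V that cV] e by auto
  qed
  have "(\<Sum>x\<in>V. 2 * (if dot u x \<and> dot v x then 1 else 0) + (if dot (vadd u v) x then 1 else 0))
      = (\<Sum>x\<in>V. (if dot u x then 1 else 0) + (if dot v x then 1 else (0::nat)))"
    using u v by (intro sum.cong) (auto simp: dot_vadd_left)
  then have "2 * card {x\<in>V. dot u x \<and> dot v x} + card {x\<in>V. dot (vadd u v) x}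
      = card {x\<in>V. dot u x} + card {x\<in>V. dot v x}"
    using fin by (simp add: sum.distrib flip: sum_distrib_left sum.inter_filter)
  moreover have "4 dvd card {x\<in>V. dot u x} + card {x\<in>V. dot v x}"
    using four_dvd[OF u] four_dvd[OF v] by (rule dvd_add)
  ultimately have "4 dvd 2 * card {x\<in>V. dot u x \<and> dot v x} + card {x\<in>V. dot (vadd u v) x}"
    by simp
  moreover have "4 dvd card {x\<in>V. dot (vadd u v) x}"
    using four_dvd[of "vadd u v"] u v by simp
  ultimately have "4 dvd 2 * card {x\<in>V. dot u x \<and> dot v x}"
    by (simp add: dvd_add_left_iff)
  then show ?thesis by presburger
qed

section \<open>Arithmetic of the Griesmer function\<close>

lemma nat_ceiling_divide:
  assumes "b > 0"
  shows "nat \<lceil>real d / real b\<rceil> = (d + b - 1) div b"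
proof -
  define q where "q = (d + b - 1) div b"
  have "q * b + (d + b - 1) mod b = d + b - 1"
    unfolding q_def by (rule div_mult_mod_eq)
  moreover have "(d + b - 1) mod b < b"
    using assms by (rule mod_less_divisor)
  ultimately
  have "q * b + 1 \<le> d + b" and "d \<le> q * b"
    using assms by linarith+
  then have "real q * real b + 1 \<le> real d + real b" and "real d \<le> real q * real b"
    by (metis of_nat_1 of_nat_add of_nat_le_iff of_nat_mult)+
  then have "\<lceil>real d / real b\<rceil> = int q"
    using assms by (intro ceiling_unique) (simp_all add: field_simps)
  then show ?thesis
    unfolding q_def by simp
qed

lemma g_eq_sum_div: "g k d = (\<Sum>i<k. (d + 2 ^ i - 1) div 2 ^ i)"
  unfolding g_def using nat_ceiling_divide[of "2 ^ _" d] by simp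

lemma div_pow2_Suc:
  fixes D i :: nat
  shows "(D + 2 ^ Suc i - 1) div 2 ^ Suc i = ((D + 1) div 2 + 2 ^ i - 1) div 2 ^ i"
proof -
  obtain j where j: "(2::nat) ^ i = Suc j"
    using not0_implies_Suc by fastforce
  then have "(D + 2 ^ Suc i - 1) div 2 = (D + 1) div 2 + 2 ^ i - 1"
    by simp
  then show ?thesis
    by (simp add: div_mult2_eq)
qed

lemma g_Suc: "g (Suc k) D = D + g k ((D + 1) div 2)"
  unfolding g_eq_sum_div sum.lessThan_Suc_shift div_pow2_Suc by simp

lemma le_g: "k \<ge> 1 \<Longrightarrow> D \<le> g k D"
  by (cases k) (auto simp: g_Suc)

lemma sum_pow2_reversed: "(\<Sum>i<k. (2::nat) ^ (k - 1 - i)) = 2 ^ k - 1"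
proof -
  have "(\<Sum>i<k. (2::nat) ^ (k - 1 - i)) = (\<Sum>i<k. 2 ^ i)"
    by (rule sum.reindex_bij_witness[of _ "\<lambda>i. k - 1 - i" "\<lambda>i. k - 1 - i"]) auto
  also have "\<dots> = 2 ^ k - 1"
    by (induction k) simp_all
  finally show ?thesis .
qed

lemma g_add_mult_pow2: "g k (m * 2 ^ (k - 1) + e) = m * (2 ^ k - 1) + g k e"
proof -
  have "(m * 2 ^ (k - 1) + e + 2 ^ i - 1) div 2 ^ i = m * 2 ^ (k - 1 - i) + (e + 2 ^ i - 1) div 2 ^ i"
    if "i < k" for i
  proof -
    have "m * 2 ^ (k - 1 - i) * 2 ^ i = m * 2 ^ (k - 1)"
      using that by (simp add: mult.assoc flip: power_add)
    moreover have "(2::nat) ^ i \<ge> 1" by simp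
    ultimately have "m * 2 ^ (k - 1) + e + 2 ^ i - 1 = (e + 2 ^ i - 1) + m * 2 ^ (k - 1 - i) * 2 ^ i"
      by linarith
    then show ?thesis by simp
  qed
  then have "g k (m * 2 ^ (k - 1) + e) = (\<Sum>i<k. m * 2 ^ (k - 1 - i) + (e + 2 ^ i - 1) div 2 ^ i)"
    unfolding g_eq_sum_div by (intro sum.cong) auto
  then show ?thesis
    using sum_pow2_reversed[of k] by (simp add: sum.distrib g_eq_sum_div flip: sum_distrib_left)
qed

section \<open>Linear codes and the Griesmer bound\<close>

lemma lin_codeD:
  assumes "lin_code n k C"
  shows "\<And>x. x \<in> C \<Longrightarrow> length x = n" and "zeros n \<in> C"
    and "\<And>x y. x \<in> C \<Longrightarrow> y \<in> C \<Longrightarrow> vadd x y \<in> C" and "card C = 2 ^ k"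
  using assms unfolding lin_code_def by auto

lemma lin_code_finite: "lin_code n k C \<Longrightarrow> finite C"
  by (metis card.infinite lin_codeD(4) power_not_zero zero_neq_numeral)

lemma lin_code_nonzero:
  assumes "lin_code n k C" and "k \<ge> 1"
  shows "\<exists>x\<in>C. x \<noteq> zeros n"
proof (rule ccontr)
  assume "\<not> ?thesis"
  then have "card C \<le> card {zeros n}"
    by (intro card_mono) auto
  moreover have "(2::nat) ^ k \<ge> 2"
    using assms(2) by (cases k) auto
  ultimately show False
    using lin_codeD(4)[OF assms(1)] by simp
qed

definition puncture :: "bool list \<Rightarrow> bool list \<Rightarrow> bool list" where
  "puncture c x = map fst (filter (\<lambda>p. \<not> snd p) (zip x c))"

definition wt_on :: "bool list \<Rightarrow> bool list \<Rightarrow> nat" where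
  "wt_on c x = length (filter (\<lambda>p. fst p \<and> snd p) (zip x c))"

lemma puncture_Cons [simp]: "puncture (b # c) (a # x) = (if b then puncture c x else a # puncture c x)"
  by (simp add: puncture_def)

lemma wt_on_Cons [simp]: "wt_on (b # c) (a # x) = (if a \<and> b then Suc (wt_on c x) else wt_on c x)"
  by (simp add: wt_on_def)

lemma length_puncture: "length x = length c \<Longrightarrow> length (puncture c x) = length c - wt c"
proof (induction x c rule: list_induct2)
  case Nil
  then show ?case by (simp add: puncture_def)
next
  case (Cons a x b c)
  then show ?case using wt_le_length[of c] by (auto simp: Suc_diff_le)
qed

lemma puncture_vadd:
  "length x = length c \<Longrightarrow> length y = length c \<Longrightarrow> puncture c (vadd x y) = vadd (puncture c x) (puncture c y)"
proof (induction x c arbitrary: y rule: list_induct2)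
  case Nil
  then show ?case by (simp add: puncture_def)
next
  case (Cons a x b c)
  then show ?case by (cases y) auto
qed

lemma puncture_zeros: "length c = n \<Longrightarrow> puncture c (zeros n) = zeros (n - wt c)"
  by (induction c arbitrary: n) (auto simp: puncture_def wt_def Suc_diff_le length_filter_le)

lemma puncture_vadd_self: "length x = length c \<Longrightarrow> puncture c (vadd x c) = puncture c x"
  by (induction x c rule: list_induct2) auto

lemma wt_eq_puncture_plus_wt_on: "length x = length c \<Longrightarrow> wt x = wt (puncture c x) + wt_on c x"
  by (induction x c rule: list_induct2) (auto simp: wt_on_def puncture_def)

lemma wt_on_plus_wt_on_vadd: "length x = length c \<Longrightarrow> wt_on c x + wt_on c (vadd x c) = wt c"
  by (induction x c rule: list_induct2) (auto simp: wt_on_def)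

text \<open>The residual code of \<open>C\<close> with respect to a nonzero codeword \<open>c\<close> of minimum weight.\<close>

context
  fixes n k :: nat and C :: "bool list set" and c :: "bool list"
  assumes lin: "lin_code n (Suc k) C" and c: "c \<in> C" "c \<noteq> zeros n"
    and c_min: "\<And>y. y \<in> C \<Longrightarrow> y \<noteq> zeros n \<Longrightarrow> wt c \<le> wt y"
begin

private lemma len: "x \<in> C \<Longrightarrow> length x = n"
  using lin_codeD(1)[OF lin] .

private lemma closed: "x \<in> C \<Longrightarrow> y \<in> C \<Longrightarrow> vadd x y \<in> C"
  using lin_codeD(3)[OF lin] .

lemma puncture_eq_zeros_residual:
  assumes x: "x \<in> C" and px: "puncture c x = zeros (n - wt c)"
  shows "x = zeros n \<or> x = c"
proof (rule ccontr)
  assume nx: "\<not> (x = zeros n \<or> x = c)"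
  have lx: "length x = n" and lc: "length c = n"
    using len x c by auto
  have "vadd x c \<noteq> zeros n"
    using vadd_eq_zeros_iff[of x c] lx lc nx by simp
  then have "wt c \<le> wt (vadd x c)"
    using c_min closed[OF x c(1)] by simp
  moreover have "wt c \<le> wt x"
    using c_min x nx by simp
  moreover have "wt x = wt_on c x" and "wt (vadd x c) = wt_on c (vadd x c)"
    using wt_eq_puncture_plus_wt_on[of x c] wt_eq_puncture_plus_wt_on[of "vadd x c" c]
      puncture_vadd_self[of x c] px lx lc by (simp_all add: wt_def)
  ultimately have "wt (vadd x c) = 0"
    using wt_on_plus_wt_on_vadd[of x c] lx lc by linarith
  with \<open>vadd x c \<noteq> zeros n\<close> show False
    using wt_eq_0_iff[of "vadd x c"] lx lc by simp
qed

lemma puncture_fiber_residual: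
  assumes x: "x \<in> C"
  shows "{y\<in>C. puncture c y = puncture c x} = {x, vadd x c}"
proof -
  have lx: "length x = n" and lc: "length c = n"
    using len x c by auto
  show ?thesis
  proof (intro equalityI subsetI)
    fix y
    assume "y \<in> {x, vadd x c}"
    then show "y \<in> {y\<in>C. puncture c y = puncture c x}"
      using x closed[OF x c(1)] puncture_vadd_self[of x c] lx lc by auto
  next
    fix y
    assume "y \<in> {y\<in>C. puncture c y = puncture c x}"
    then have y: "y \<in> C" "puncture c y = puncture c x" by auto
    have ly: "length y = n" using len y(1) by simp
    have "puncture c (vadd x y) = zeros (n - wt c)"
      using puncture_vadd[of x c y] length_puncture[of x c] lx ly lc y(2) by simp
    then have "vadd x y = zeros n \<or> vadd x y = c"
      using puncture_eq_zeros_residual closed[OF x y(1)] by simp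
    moreover have "vadd x (vadd x y) = y"
      using lx ly by (simp flip: vadd_assoc)
    ultimately have "y = x \<or> y = vadd x c"
      using lx by auto
    then show "y \<in> {x, vadd x c}" by simp
  qed
qed

lemma lin_code_residual: "lin_code (n - wt c) k (puncture c ` C)"
proof -
  have lc: "length c = n" using len c by simp
  have fiber_card: "card {y\<in>C. puncture c y = puncture c x} = 2" if x: "x \<in> C" for x
  proof -
    have "x \<noteq> vadd x c"
    proof
      assume "x = vadd x c"
      then have "vadd x (vadd x c) = vadd x x" by simp
      then show False
        using c len[OF x] lc by (simp flip: vadd_assoc)
    qed
    then show ?thesis using puncture_fiber_residual[OF x] by simp
  qed
  have "card C = (\<Sum>y\<in>puncture c ` C. card {x\<in>C. puncture c x = y})"
    using sum.image_gen[OF lin_code_finite[OF lin], of "\<lambda>_. 1::nat" "puncture c"]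
    by (simp flip: card_eq_sum)
  also have "\<dots> = (\<Sum>y\<in>puncture c ` C. 2)"
    using fiber_card by (intro sum.cong) auto
  finally have card: "card (puncture c ` C) = 2 ^ k"
    using lin_codeD(4)[OF lin] by simp
  show ?thesis
    unfolding lin_code_def
  proof (intro conjI ballI)
    show "length y = n - wt c" if "y \<in> puncture c ` C" for y
      using that length_puncture len lc by auto
    show "zeros (n - wt c) \<in> puncture c ` C"
      using puncture_zeros[OF lc] lin_codeD(2)[OF lin] by (metis image_eqI)
    show "vadd y z \<in> puncture c ` C" if yz: "y \<in> puncture c ` C" "z \<in> puncture c ` C" for y z
    proof -
      obtain a b where ab: "a \<in> C" "b \<in> C" "y = puncture c a" "z = puncture c b"
        using yz by blast
      then have "vadd y z = puncture c (vadd a b)"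
        using puncture_vadd len lc by simp
      then show ?thesis
        using closed[OF ab(1,2)] by blast
    qed
  qed (fact card)
qed

lemma wt_residual:
  assumes y: "y \<in> puncture c ` C" "y \<noteq> zeros (n - wt c)"
  shows "wt c \<le> 2 * wt y"
proof -
  obtain x where x: "x \<in> C" "y = puncture c x" using y by blast
  have lx: "length x = n" and lc: "length c = n"
    using len x c by auto
  have "x \<noteq> zeros n" and "x \<noteq> c"
    using x y puncture_zeros[OF lc] puncture_vadd_self[of "zeros n" c] lc by auto
  then have "vadd x c \<noteq> zeros n"
    using vadd_eq_zeros_iff[of x c] lx lc by simp
  then have "wt c \<le> wt x" "wt c \<le> wt (vadd x c)"
    using c_min x(1) closed[OF x(1) c(1)] \<open>x \<noteq> zeros n\<close> by auto
  moreover have "wt x = wt y + wt_on c x" "wt (vadd x c) = wt y + wt_on c (vadd x c)"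
    using wt_eq_puncture_plus_wt_on[of x c] wt_eq_puncture_plus_wt_on[of "vadd x c" c]
      puncture_vadd_self[of x c] lx lc x(2) by simp_all
  ultimately show ?thesis
    using wt_on_plus_wt_on_vadd[of x c] lx lc by linarith
qed

end

theorem griesmer_bound:
  assumes "lin_code n k C" and "\<forall>x\<in>C. x \<noteq> zeros n \<longrightarrow> D \<le> wt x"
  shows "g k D \<le> n"
  using assms
proof (induction k arbitrary: n C D)
  case 0
  then show ?case by (simp add: g_def)
next
  case (Suc k)
  obtain x0 where "x0 \<in> C" "x0 \<noteq> zeros n"
    using lin_code_nonzero[OF Suc.prems(1)] by auto
  define c where "c = arg_min wt (\<lambda>x. x \<in> C \<and> x \<noteq> zeros n)"
  have "(c \<in> C \<and> c \<noteq> zeros n) \<and> (\<forall>y. y \<in> C \<and> y \<noteq> zeros n \<longrightarrow> wt c \<le> wt y)"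
    unfolding c_def by (rule arg_min_nat_lemma) (use \<open>x0 \<in> C\<close> \<open>x0 \<noteq> zeros n\<close> in auto)
  then have c: "c \<in> C" "c \<noteq> zeros n" and c_min: "\<And>y. y \<in> C \<Longrightarrow> y \<noteq> zeros n \<Longrightarrow> wt c \<le> wt y"
    by auto
  have "D \<le> wt c" and "wt c \<le> n"
    using Suc.prems(2) c wt_le_length[of c] lin_codeD(1)[OF Suc.prems(1)] by auto
  have "\<forall>y\<in>puncture c ` C. y \<noteq> zeros (n - wt c) \<longrightarrow> (D + 1) div 2 \<le> wt y"
  proof (intro ballI impI)
    fix y
    assume "y \<in> puncture c ` C" "y \<noteq> zeros (n - wt c)"
    then have "wt c \<le> 2 * wt y"
      using wt_residual[OF Suc.prems(1) c c_min] by blast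
    then show "(D + 1) div 2 \<le> wt y"
      using \<open>D \<le> wt c\<close> by linarith
  qed
  then have "g k ((D + 1) div 2) \<le> n - wt c"
    using Suc.IH lin_code_residual[OF Suc.prems(1) c c_min] by blast
  then show ?case
    using g_Suc[of k D] \<open>D \<le> wt c\<close> \<open>wt c \<le> n\<close> by linarith
qed

lemma min_dist_eq_Min:
  assumes "lin_code n k C"
  shows "min_dist C = Min (wt ` {x\<in>C. x \<noteq> zeros n})"
proof -
  have "{wt x | x. x \<in> C \<and> x \<noteq> zeros (length x)} = wt ` {x\<in>C. x \<noteq> zeros n}"
    using lin_codeD(1)[OF assms] by auto
  then show ?thesis
    unfolding min_dist_def by simp
qed

lemma min_dist_ge:
  assumes lin: "lin_code n k C" and "k \<ge> 1" and "\<forall>x\<in>C. x \<noteq> zeros n \<longrightarrow> D \<le> wt x"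
  shows "D \<le> min_dist C"
  unfolding min_dist_eq_Min[OF lin]
  using assms lin_code_nonzero[OF lin] lin_code_finite[OF lin] by (subst Min_ge_iff) auto

lemma min_dist_le_wt:
  assumes lin: "lin_code n k C" and "x \<in> C" "x \<noteq> zeros n"
  shows "min_dist C \<le> wt x"
  unfolding min_dist_eq_Min[OF lin]
  using assms lin_code_finite[OF lin] by (intro Min_le) auto

lemma so_code_even_wt:
  assumes "so_code n k C" "x \<in> C"
  shows "even (wt x)"
proof -
  have "orth x x"
    using assms unfolding so_code_def self_orth_def by auto
  then show ?thesis
    unfolding orth_def wt_def length_filter_conv_card by simp
qed

lemma so_code_min_dist_le:
  assumes so: "so_code N k C" and "k \<ge> 1" and "even D" and "N < g k (D + 2)"
  shows "min_dist C \<le> D"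
proof (rule ccontr)
  assume "\<not> ?thesis"
  have lin: "lin_code N k C"
    using so unfolding so_code_def by simp
  have "\<forall>x\<in>C. x \<noteq> zeros N \<longrightarrow> D + 2 \<le> wt x"
  proof (intro ballI impI)
    fix x
    assume "x \<in> C" "x \<noteq> zeros N"
    then have "D < wt x" and "even (wt x)"
      using min_dist_le_wt[OF lin] so_code_even_wt[OF so] \<open>\<not> min_dist C \<le> D\<close> by force+
    then show "D + 2 \<le> wt x"
      using \<open>even D\<close> by presburger
  qed
  then show False
    using griesmer_bound[OF lin] assms(4) by force
qed

section \<open>Irreducible polynomials over prime fields\<close>

definition x_pow_card_minus_x :: "nat \<Rightarrow> 'a::prime_card mod_ring poly" where
  "x_pow_card_minus_x j = monom 1 1 ^ (CARD('a) ^ j) - monom 1 1"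

lemma one_less_card_power: "j \<ge> 1 \<Longrightarrow> 1 < CARD('a::prime_card) ^ j"
  by (intro one_less_power) (use prime_gt_1_nat[OF prime_card[where 'a = 'a]] in auto)

lemma degree_x_pow_card_minus_x:
  assumes "j \<ge> 1"
  shows "degree (x_pow_card_minus_x j :: 'a::prime_card mod_ring poly) = CARD('a) ^ j"
  unfolding x_pow_card_minus_x_def x_pow_n
  using one_less_card_power[OF assms, where 'a = 'a]
  by (subst degree_minus_eq_right) (auto simp: degree_monom_eq)

lemma x_pow_card_minus_x_neq_0: "j \<ge> 1 \<Longrightarrow> (x_pow_card_minus_x j :: 'a::prime_card mod_ring poly) \<noteq> 0"
  using degree_x_pow_card_minus_x[where 'a = 'a] one_less_card_power[where 'a = 'a] by force

lemma pderiv_x_pow_card_minus_x: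
  assumes "j \<ge> 1"
  shows "pderiv (x_pow_card_minus_x j :: 'a::prime_card mod_ring poly) = -1"
proof -
  have "(of_nat (CARD('a) ^ j) :: 'a mod_ring) = 0"
    using assms by (cases j) auto
  then show ?thesis
    unfolding x_pow_card_minus_x_def x_pow_n by (simp add: pderiv_diff pderiv_monom)
qed

lemma sum_power_lessThan_less: "(2::nat) \<le> p \<Longrightarrow> (\<Sum>i<n. p ^ i) < p ^ n"
proof (induction n)
  case 0
  then show ?case by simp
next
  case (Suc n)
  then have "(\<Sum>i<Suc n. p ^ i) < 2 * p ^ n" by simp
  also have "\<dots> \<le> p ^ Suc n" using Suc.prems by simp
  finally show ?case .
qed

lemma not_square_dvd_x_pow_card_minus_x:
  assumes n: "n \<ge> 1" and not_unit: "\<not> is_unit p"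
  shows "\<not> p ^ 2 dvd (x_pow_card_minus_x n :: 'a::prime_card mod_ring poly)"
proof
  assume "p ^ 2 dvd x_pow_card_minus_x n"
  then obtain h where h: "x_pow_card_minus_x n = p * p * h"
    by (metis dvd_def power2_eq_square)
  have "pderiv (x_pow_card_minus_x n :: 'a mod_ring poly) = p * (2 * h * pderiv p + p * pderiv h)"
    unfolding h by (simp add: pderiv_mult algebra_simps)
  then have "p dvd 1"
    using pderiv_x_pow_card_minus_x[OF n] by (metis dvd_minus_iff dvd_triv_left)
  with not_unit show False by blast
qed

text \<open>Every irreducible factor \<open>p\<close> of \<open>X^(q^n) - X\<close> has degree at most \<open>n\<close> and divides
  \<open>X^(q^(deg p)) - X\<close>; as \<open>X^(q^n) - X\<close> is squarefree, it divides the product of the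
  \<open>X^(q^d) - X\<close> with \<open>d < n\<close> unless it has an irreducible factor of degree exactly \<open>n\<close>.\<close>

lemma x_pow_card_minus_x_dvd_prod:
  assumes n: "n \<ge> 1" and no: "\<nexists>f :: 'a::prime_card mod_ring poly. irreducible f \<and> degree f = n"
  shows "x_pow_card_minus_x n dvd (\<Prod>d\<in>{1..<n}. x_pow_card_minus_x d :: 'a mod_ring poly)"
    (is "?Qn dvd ?P")
proof (rule multiplicity_le_imp_dvd)
  show "?Qn \<noteq> 0"
    using x_pow_card_minus_x_neq_0[OF n] .
  fix p :: "'a mod_ring poly"
  assume prime: "prime p"
  show "multiplicity p ?Qn \<le> multiplicity p ?P"
  proof (cases "p dvd ?Qn")
    case False
    then show ?thesis by (simp add: not_dvd_imp_multiplicity_0)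
  next
    case True
    have irr: "irreducible p"
      using prime by (intro prime_elem_imp_irreducible prime_imp_prime_elem)
    have not_unit: "\<not> is_unit p"
      using prime prime_elem_not_unit prime_imp_prime_elem by blast
    have "degree p \<noteq> 0"
      using not_unit prime by (auto simp: is_unit_iff_degree)
    moreover have "\<not> degree p > n"
      using degree_divisor2[OF irr refl, of n] n True by (auto simp: x_pow_card_minus_x_def)
    moreover have "degree p \<noteq> n"
      using no irr by auto
    ultimately have "degree p \<in> {1..<n}" by simp
    moreover have "p dvd x_pow_card_minus_x (degree p)"
      using degree_divisor1[OF irr refl] by (simp add: x_pow_card_minus_x_def)
    ultimately have "p dvd ?P"
      by (meson dvd_prodI dvd_trans finite_atLeastLessThan)
    moreover have "?P \<noteq> 0"
      using x_pow_card_minus_x_neq_0[where 'a = 'a] by auto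
    ultimately have "1 \<le> multiplicity p ?P"
      using not_unit by (metis power_one_right power_dvd_iff_le_multiplicity)
    moreover have "\<not> 2 \<le> multiplicity p ?Qn"
      using not_square_dvd_x_pow_card_minus_x[OF n not_unit] power_dvd_iff_le_multiplicity[of ?Qn p 2]
        x_pow_card_minus_x_neq_0[OF n] not_unit by blast
    ultimately show ?thesis by simp
  qed
qed

lemma exists_irreducible_of_degree:
  assumes n: "n \<ge> 1"
  shows "\<exists>f :: 'a::prime_card mod_ring poly. irreducible f \<and> degree f = n"
proof (rule ccontr)
  let ?P = "\<Prod>d\<in>{1..<n}. x_pow_card_minus_x d :: 'a mod_ring poly"
  assume "\<not> ?thesis"
  then have "x_pow_card_minus_x n dvd ?P"
    using x_pow_card_minus_x_dvd_prod[OF n] by blast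
  moreover have "?P \<noteq> 0"
    using x_pow_card_minus_x_neq_0[where 'a = 'a] by auto
  ultimately have "degree (x_pow_card_minus_x n :: 'a mod_ring poly) \<le> degree ?P"
    by (rule dvd_imp_degree_le)
  also have "degree ?P = (\<Sum>d\<in>{1..<n}. CARD('a) ^ d)"
    using x_pow_card_minus_x_neq_0[where 'a = 'a] degree_x_pow_card_minus_x[where 'a = 'a]
    by (subst degree_prod_sum_eq) auto
  also have "\<dots> \<le> (\<Sum>d<n. CARD('a) ^ d)"
    by (intro sum_mono2) auto
  also have "\<dots> < CARD('a) ^ n"
    using prime_ge_2_nat[OF prime_card[where 'a = 'a]] by (rule sum_power_lessThan_less)
  finally show False
    using degree_x_pow_card_minus_x[OF n, where 'a = 'a] by simp
qed

lemma coprime_irreducible_poly: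
  fixes p q :: "'a::field poly"
  assumes p: "irreducible p" and q: "irreducible q" and "degree p \<noteq> degree q"
  shows "algebraic_semidom_class.coprime p q"
proof (rule algebraic_semidom_class.coprimeI)
  fix c
  assume cp: "c dvd p" and cq: "c dvd q"
  show "is_unit c"
  proof (rule ccontr)
    assume nu: "\<not> is_unit c"
    have "degree r = degree c" if r: "irreducible r" "c dvd r" for r
    proof -
      obtain e where e: "r = c * e" using r(2) by (elim dvdE)
      then have "is_unit e" and "c \<noteq> 0"
        using irreducibleD[OF r(1) e] nu r(1) by auto
      then show ?thesis
        using e by (simp add: degree_mult_eq is_unit_iff_degree)
    qed
    then show False
      using p q cp cq \<open>degree p \<noteq> degree q\<close> by metis
  qed
qed

lemma prod_dvd_if_pairwise_coprime:
  fixes f :: "'b \<Rightarrow> 'a::semiring_gcd"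
  assumes "finite S" and "\<And>i j. i \<in> S \<Longrightarrow> j \<in> S \<Longrightarrow> i \<noteq> j \<Longrightarrow> algebraic_semidom_class.coprime (f i) (f j)"
    and "\<And>i. i \<in> S \<Longrightarrow> f i dvd x"
  shows "prod f S dvd x"
  using assms
proof (induction S rule: finite_induct)
  case empty
  then show ?case by simp
next
  case (insert a S)
  have "algebraic_semidom_class.coprime (f a) (prod f S)"
    using insert.prems(1) insert.hyps(2) by (intro prod_coprime_right) (metis insertCI)
  then show ?case
    using insert by (simp add: divides_mult)
qed

lemma card_times_Suc_card_le_sum:
  fixes S :: "nat set"
  assumes "finite S" "0 \<notin> S"
  shows "card S * (card S + 1) \<le> 2 * \<Sum>S"
  using assms
proof (induction "card S" arbitrary: S)
  case 0
  then show ?case by simp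
next
  case (Suc t)
  define m where "m = Max S"
  have "S \<noteq> {}" using Suc by auto
  then have "m \<in> S" and "S \<subseteq> {1..m}"
    using Suc.prems unfolding m_def by (auto simp: Suc_le_eq gr0I)
  then have "card S \<le> m"
    using card_mono[of "{1..m}" S] by simp
  have "card (S - {m}) = t"
    using Suc.hyps(2) \<open>m \<in> S\<close> Suc.prems(1) by simp
  then have "t * (t + 1) \<le> 2 * \<Sum>(S - {m})"
    using Suc.hyps(1)[of "S - {m}"] Suc.prems by auto
  moreover have "\<Sum>S = m + \<Sum>(S - {m})"
    using Suc.prems \<open>m \<in> S\<close> by (simp add: sum.remove)
  moreover have "card S * (card S + 1) = t * (t + 1) + 2 * card S"
    using Suc.hyps(2)[symmetric] by simp
  ultimately show ?case
    using \<open>card S \<le> m\<close> by linarith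
qed

section \<open>Polynomial multiples in \<open>GF(2)^k\<close>\<close>

type_synonym gf2 = "bool mod_ring"

lemma gf2_cases: "(a::gf2) = 0 \<or> a = 1"
proof -
  obtain i where "i < CARD(bool)" "a = of_nat i"
    using surj_of_nat_mod_ring[of a] by blast
  then show ?thesis
    by (auto simp: less_2_cases_iff)
qed

lemma two_gf2: "(2::gf2) = 0"
  using of_nat_card_eq_0[where 'a = bool] by simp

text \<open>Coordinate \<open>i\<close> of a vector is the coefficient of \<open>X^i\<close>.\<close>

definition poly_of_vec :: "bool list \<Rightarrow> gf2 poly" where
  "poly_of_vec xs = Poly (map (\<lambda>b. if b then 1 else 0) xs)"

definition vec_of_poly :: "nat \<Rightarrow> gf2 poly \<Rightarrow> bool list" where
  "vec_of_poly k p = map (\<lambda>i. coeff p i = 1) [0..<k]"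

lemma length_vec_of_poly [simp]: "length (vec_of_poly k p) = k"
  by (simp add: vec_of_poly_def)

lemma coeff_poly_of_vec: "coeff (poly_of_vec xs) i = (if i < length xs \<and> xs ! i then 1 else 0)"
  unfolding poly_of_vec_def coeff_Poly by (auto simp: nth_default_def)

lemma poly_of_vec_vadd: "length x = length y \<Longrightarrow> poly_of_vec (vadd x y) = poly_of_vec x + poly_of_vec y"
  by (rule poly_eqI) (auto simp: coeff_poly_of_vec vadd_def two_gf2)

lemma poly_of_vec_zeros [simp]: "poly_of_vec (zeros n) = 0"
  by (rule poly_eqI) (simp add: coeff_poly_of_vec)

lemma vec_of_poly_poly_of_vec: "vec_of_poly (length x) (poly_of_vec x) = x"
  by (rule nth_equalityI) (auto simp: vec_of_poly_def coeff_poly_of_vec)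

lemma poly_of_vec_eq_0_iff: "poly_of_vec x = 0 \<longleftrightarrow> x = zeros (length x)"
  by (metis poly_of_vec_zeros vec_of_poly_poly_of_vec length_replicate)

lemma degree_poly_of_vec_less: "poly_of_vec x \<noteq> 0 \<Longrightarrow> degree (poly_of_vec x) < length x"
  by (metis coeff_poly_of_vec leading_coeff_0_iff not_le_imp_less)

lemma poly_of_vec_vec_of_poly:
  assumes "degree p < k"
  shows "poly_of_vec (vec_of_poly k p) = p"
proof (rule poly_eqI)
  fix i
  show "coeff (poly_of_vec (vec_of_poly k p)) i = coeff p i"
    using assms gf2_cases[of "coeff p i"] coeff_eq_0[of p i]
    by (cases "i < k") (auto simp: coeff_poly_of_vec vec_of_poly_def)
qed

definition multiples :: "nat \<Rightarrow> gf2 poly \<Rightarrow> bool list set" where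
  "multiples k R = {x \<in> vecs k. R dvd poly_of_vec x}"

lemma bin_subspace_multiples: "bin_subspace k (multiples k R)"
  unfolding bin_subspace_def multiples_def vecs_def by (auto simp: poly_of_vec_vadd)

lemma degree_quotient_multiples:
  assumes x: "x \<in> multiples k R" and R: "R \<noteq> 0" and d: "degree R < k"
  shows "degree (poly_of_vec x div R) < k - degree R"
proof -
  have "length x = k" and "R dvd poly_of_vec x"
    using x unfolding multiples_def vecs_def by auto
  then obtain q where q: "poly_of_vec x = R * q"
    by (elim dvdE)
  then have "q \<noteq> 0 \<Longrightarrow> degree R + degree q < k"
    using R degree_poly_of_vec_less[of x] \<open>length x = k\<close> by (simp add: degree_mult_eq)
  then show ?thesis
    using q R d by (cases "q = 0") auto
qed

lemma card_multiples:
  assumes R: "R \<noteq> 0" and d: "degree R < k"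
  shows "card (multiples k R) = 2 ^ (k - degree R)"
proof -
  let ?d = "degree R"
  define h where "h y = vec_of_poly k (R * poly_of_vec y)" for y
  define h' where "h' x = vec_of_poly (k - ?d) (poly_of_vec x div R)" for x
  have deg_mult: "degree (R * q) < k" if "degree q < k - ?d" for q
    using that d R by (cases "q = 0") (auto simp: degree_mult_eq)
  have deg_vec: "degree (poly_of_vec y) < k - ?d" if "y \<in> vecs (k - ?d)" for y
    using that d degree_poly_of_vec_less[of y] unfolding vecs_def
    by (cases "poly_of_vec y = 0") auto
  have deg_quot: "degree (poly_of_vec x div R) < k - ?d" if "x \<in> multiples k R" for x
    using degree_quotient_multiples[OF that R d] .
  have "bij_betw h (vecs (k - ?d)) (multiples k R)"
  proof (rule bij_betw_byWitness[where f' = h'])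
    show "\<forall>y\<in>vecs (k - ?d). h' (h y) = y"
    proof
      fix y
      assume y: "y \<in> vecs (k - ?d)"
      then have "poly_of_vec (h y) = R * poly_of_vec y"
        unfolding h_def using deg_mult deg_vec by (simp add: poly_of_vec_vec_of_poly)
      then show "h' (h y) = y"
        unfolding h'_def using R y vec_of_poly_poly_of_vec[of y] by (simp add: vecs_def)
    qed
    show "\<forall>x\<in>multiples k R. h (h' x) = x"
      using deg_quot
      by (auto simp: h_def h'_def multiples_def vecs_def poly_of_vec_vec_of_poly vec_of_poly_poly_of_vec)
    show "h ` vecs (k - ?d) \<subseteq> multiples k R"
      using deg_mult deg_vec by (auto simp: h_def multiples_def vecs_def poly_of_vec_vec_of_poly)
    show "h' ` multiples k R \<subseteq> vecs (k - ?d)"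
      by (auto simp: h'_def vecs_def)
  qed
  then show ?thesis
    by (simp flip: bij_betw_same_card)
qed

text \<open>A nonzero vector of \<open>GF(2)^k\<close> is a polynomial of degree \<open>< k\<close>, so it is divisible by
  irreducibles of pairwise distinct degrees only if these degrees sum to at most \<open>k - 1\<close>.\<close>

lemma card_multiples_containing:
  assumes C: "finite C" "0 \<notin> C" and R: "\<And>c. c \<in> C \<Longrightarrow> irreducible (R c) \<and> degree (R c) = c"
    and x: "x \<in> vecs k" "x \<noteq> zeros k"
  shows "card {c\<in>C. x \<in> multiples k (R c)} * (card {c\<in>C. x \<in> multiples k (R c)} + 1) \<le> 2 * (k - 1)"
proof -
  let ?S = "{c\<in>C. x \<in> multiples k (R c)}"
  have "finite ?S" using C by simp
  have lx: "length x = k" and nz: "poly_of_vec x \<noteq> 0"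
    using x poly_of_vec_eq_0_iff[of x] unfolding vecs_def by auto
  have "algebraic_semidom_class.coprime (R i) (R j)" if "i \<in> ?S" "j \<in> ?S" "i \<noteq> j" for i j
    using R[of i] R[of j] that by (intro coprime_irreducible_poly) auto
  then have "(\<Prod>c\<in>?S. R c) dvd poly_of_vec x"
    by (intro prod_dvd_if_pairwise_coprime \<open>finite ?S\<close>) (auto simp: multiples_def)
  then have "degree (\<Prod>c\<in>?S. R c) \<le> degree (poly_of_vec x)"
    using nz by (rule dvd_imp_degree_le)
  also have "\<dots> \<le> k - 1"
    using degree_poly_of_vec_less[OF nz] lx by simp
  also have "degree (\<Prod>c\<in>?S. R c) = \<Sum>?S"
    using R by (subst degree_prod_eq_sum_degree) (auto intro: sum.cong)
  finally have "\<Sum>?S \<le> k - 1" .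
  moreover have "card ?S * (card ?S + 1) \<le> 2 * \<Sum>?S"
    using card_times_Suc_card_le_sum[OF \<open>finite ?S\<close>] C by auto
  ultimately show ?thesis by linarith
qed

section \<open>Binary digits and the anticode parameters\<close>

definition sum_div_pow2 :: "nat \<Rightarrow> nat \<Rightarrow> nat" where
  "sum_div_pow2 K n = (\<Sum>i<K. n div 2 ^ i)"

lemma g_complement:
  assumes "s \<le> 2 ^ (k - 1)"
  shows "g k (2 ^ (k - 1) - s) + sum_div_pow2 k s = 2 ^ k - 1"
proof -
  have "(2 ^ (k - 1) - s + 2 ^ i - 1) div 2 ^ i + s div 2 ^ i = 2 ^ (k - 1 - i)" if i: "i < k" for i
  proof -
    define a b where "a = s div 2 ^ i" and "b = s mod 2 ^ i"
    define P :: nat where "P = 2 ^ (k - 1 - i)"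
    have s: "s = a * 2 ^ i + b" and "b < 2 ^ i"
      unfolding a_def b_def by (simp_all flip: div_mult_mod_eq)
    have pk: "(2::nat) ^ (k - 1) = P * 2 ^ i"
      unfolding P_def using i by (simp flip: power_add)
    then have "a \<le> P"
      using assms s by (metis add_leD1 mult_le_cancel2 zero_less_numeral zero_less_power)
    then have "2 ^ (k - 1) - s + 2 ^ i - 1 = (P - a) * 2 ^ i + (2 ^ i - 1 - b)"
      using pk s \<open>b < 2 ^ i\<close> assms by (simp add: diff_mult_distrib)
    then have "(2 ^ (k - 1) - s + 2 ^ i - 1) div 2 ^ i = P - a"
      by simp
    then show ?thesis
      using \<open>a \<le> P\<close> unfolding a_def P_def by simp
  qed
  then have "g k (2 ^ (k - 1) - s) + sum_div_pow2 k s = (\<Sum>i<k. (2::nat) ^ (k - 1 - i))"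
    unfolding g_eq_sum_div sum_div_pow2_def by (simp flip: sum.distrib)
  then show ?thesis
    using sum_pow2_reversed[of k] by simp
qed

definition bin_digits :: "nat \<Rightarrow> nat \<Rightarrow> nat set" where
  "bin_digits K n = {j. j < K \<and> odd (n div 2 ^ j)}"

lemma finite_bin_digits [simp]: "finite (bin_digits K n)"
  by (simp add: bin_digits_def)

lemma bin_digits_Suc: "bin_digits (Suc K) n = (if odd n then {0} else {}) \<union> Suc ` bin_digits K (n div 2)"
proof -
  have "j \<in> bin_digits (Suc K) n \<longleftrightarrow> j \<in> (if odd n then {0} else {}) \<union> Suc ` bin_digits K (n div 2)" for j
    by (cases j) (auto simp: bin_digits_def div_mult2_eq)
  then show ?thesis by blast
qed

lemma sum_bin_digits: "n < 2 ^ K \<Longrightarrow> (\<Sum>j\<in>bin_digits K n. 2 ^ j) = n"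
proof (induction K arbitrary: n)
  case 0
  then show ?case by (simp add: bin_digits_def)
next
  case (Suc K)
  have "n div 2 < 2 ^ K"
    using Suc.prems by simp
  then have "(\<Sum>j\<in>Suc ` bin_digits K (n div 2). (2::nat) ^ j) = 2 * (n div 2)"
    by (simp add: sum.reindex Suc.IH flip: sum_distrib_left)
  then show ?case
    by (simp add: bin_digits_Suc sum.insert_if image_iff)
qed

lemma sum_div_pow2_plus_card_bin_digits:
  "n < 2 ^ K \<Longrightarrow> sum_div_pow2 K n + card (bin_digits K n) = 2 * n"
proof (induction K arbitrary: n)
  case 0
  then show ?case by (simp add: bin_digits_def sum_div_pow2_def)
next
  case (Suc K)
  have "sum_div_pow2 (Suc K) n = n + sum_div_pow2 K (n div 2)"
    unfolding sum_div_pow2_def by (simp add: sum.lessThan_Suc_shift div_mult2_eq del: sum.lessThan_Suc)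
  moreover have "card (bin_digits (Suc K) n) = (if odd n then 1 else 0) + card (bin_digits K (n div 2))"
    by (simp add: bin_digits_Suc card_image image_iff)
  ultimately show ?case
    using Suc by simp
qed

lemma sum_div_pow2_eq_sum_bin_digits:
  assumes "n < 2 ^ K"
  shows "sum_div_pow2 K n = (\<Sum>j\<in>bin_digits K n. 2 ^ (j + 1) - 1)"
proof -
  have "(\<Sum>j\<in>bin_digits K n. (2::nat) ^ (j + 1) - 1) + card (bin_digits K n)
      = (\<Sum>j\<in>bin_digits K n. (2 ^ (j + 1) - 1) + 1)"
    by (simp only: sum.distrib card_eq_sum)
  also have "\<dots> = 2 * (\<Sum>j\<in>bin_digits K n. 2 ^ j)"
    by (simp add: sum_distrib_left)
  also have "\<dots> = 2 * n"
    using sum_bin_digits[OF assms] by simp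
  finally show ?thesis
    using sum_div_pow2_plus_card_bin_digits[OF assms] by linarith
qed

lemma bin_digits_2_mod_4:
  assumes s4: "s mod 4 = 2" and s_less: "s < 2 ^ (k - 1)"
  obtains J where "J \<subseteq> {2..k-2}" and "s = 2 + (\<Sum>j\<in>J. 2 ^ j)"
    and "sum_div_pow2 k s = 3 + (\<Sum>j\<in>J. 2 ^ (j + 1) - 1)"
proof -
  let ?B = "bin_digits k s"
  have "1 < k"
  proof (rule ccontr)
    assume "\<not> 1 < k"
    then have "s = 0"
      using s_less by simp
    with s4 show False by simp
  qed
  have "s < 2 ^ k"
    using s_less by (meson diff_le_self less_le_trans one_le_numeral power_increasing)
  have "1 \<in> ?B" and "0 \<notin> ?B" and "k - 1 \<notin> ?B"
    using s4 s_less \<open>1 < k\<close> unfolding bin_digits_def by (auto, presburger+)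
  define J where "J = ?B - {1}"
  have B: "?B = insert 1 J" and "1 \<notin> J" and "finite J"
    unfolding J_def using \<open>1 \<in> ?B\<close> by auto
  have "J \<subseteq> {2..k-2}"
  proof
    fix j
    assume "j \<in> J"
    then have "j \<in> ?B" "j \<noteq> 1"
      unfolding J_def by auto
    moreover have "j \<noteq> 0" "j \<noteq> k - 1"
      using \<open>j \<in> ?B\<close> \<open>0 \<notin> ?B\<close> \<open>k - 1 \<notin> ?B\<close> by metis+
    moreover have "j < k"
      using \<open>j \<in> ?B\<close> by (simp add: bin_digits_def)
    ultimately show "j \<in> {2..k-2}" by simp
  qed
  moreover have "s = 2 + (\<Sum>j\<in>J. 2 ^ j)"
    using sum_bin_digits[OF \<open>s < 2 ^ k\<close>] \<open>1 \<notin> J\<close> \<open>finite J\<close> unfolding B by simp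
  moreover have "sum_div_pow2 k s = 3 + (\<Sum>j\<in>J. 2 ^ (j + 1) - 1)"
    using sum_div_pow2_eq_sum_bin_digits[OF \<open>s < 2 ^ k\<close>] \<open>1 \<notin> J\<close> \<open>finite J\<close> unfolding B by simp
  ultimately show ?thesis
    using that by blast
qed

text \<open>The codimensions \<open>c \<in> C\<close> become the degrees of the irreducible polynomials
  defining the anticode.\<close>

lemma anticode_decomposition:
  assumes "s mod 4 = 2" and "s < 2 ^ (k - 1)"
  shows "\<exists>C \<subseteq> {1..k-3}. s = 2 + (\<Sum>c\<in>C. 2 ^ (k - 1 - c))
    \<and> sum_div_pow2 k s = 3 + (\<Sum>c\<in>C. 2 ^ (k - c) - 1)"
proof -
  obtain J where J: "J \<subseteq> {2..k-2}" and s: "s = 2 + (\<Sum>j\<in>J. 2 ^ j)"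
    and sum_div: "sum_div_pow2 k s = 3 + (\<Sum>j\<in>J. 2 ^ (j + 1) - 1)"
    using bin_digits_2_mod_4[OF assms] .
  have J_bounds: "2 \<le> j" "j \<le> k - 2" if "j \<in> J" for j
    using J that by auto
  define C where "C = (\<lambda>j. k - 1 - j) ` J"
  have inj: "inj_on (\<lambda>j. k - 1 - j) J"
  proof (rule inj_onI)
    fix x y
    assume "x \<in> J" "y \<in> J" "k - 1 - x = k - 1 - y"
    then show "x = y" using J_bounds(2)[of x] J_bounds(2)[of y] by linarith
  qed
  have rev: "k - 1 - (k - 1 - j) = j" "k - (k - 1 - j) = j + 1" if "j \<in> J" for j
    using J_bounds[OF that] by linarith+
  have "C \<subseteq> {1..k-3}"
  proof (unfold C_def, rule image_subsetI)
    fix j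
    assume "j \<in> J"
    then have "1 \<le> k - 1 - j" "k - 1 - j \<le> k - 3"
      using J_bounds[OF \<open>j \<in> J\<close>] by linarith+
    then show "k - 1 - j \<in> {1..k-3}"
      by simp
  qed
  moreover have "(\<Sum>c\<in>C. (2::nat) ^ (k - 1 - c)) = (\<Sum>j\<in>J. 2 ^ j)"
    by (rule sum.reindex_cong[OF inj C_def]) (simp only: rev)
  moreover have "(\<Sum>c\<in>C. (2::nat) ^ (k - c) - 1) = (\<Sum>j\<in>J. 2 ^ (j + 1) - 1)"
    by (rule sum.reindex_cong[OF inj C_def]) (simp only: rev)
  ultimately show ?thesis
    using s sum_div by auto
qed

text \<open>Both alternatives of the hypothesis on \<open>m\<close> give \<open>2(k-1) < (m+2)(m+3)\<close>, which bounds
  the number of irreducibles of distinct degrees dividing a polynomial of degree \<open>< k\<close>.\<close>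

lemma threshold_bound_quadratic:
  fixes k m :: nat
  assumes k5: "k \<ge> 5" and "\<lceil>(real k + 2) * (real k - 3) / (2 * real k)\<rceil> \<le> int m + 1"
  shows "m \<ge> 1 \<and> 2 * (k - 1) < (m + 2) * (m + 3)"
proof -
  have "(real k + 2) * (real k - 3) \<le> (real m + 1) * (2 * real k)"
    using assms by (simp add: ceiling_le_iff divide_le_eq)
  then have "real (k * k) \<le> real (k + 6 + 2 * k * (m + 1))"
    by (simp add: algebra_simps)
  then have "k * k \<le> k + 6 + 2 * k * (m + 1)"
    by (simp only: of_nat_le_iff)
  have "k \<le> 2 * m + 4"
  proof (rule ccontr)
    assume "\<not> ?thesis"
    then have "k * (2 * m + 5) \<le> k * k"
      by (intro mult_le_mono2) linarith
    moreover have "k * (2 * m + 5) = 2 * (k * m) + 5 * k" and "2 * k * (m + 1) = 2 * (k * m) + 2 * k"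
      by (simp_all add: algebra_simps)
    ultimately show False
      using \<open>k * k \<le> k + 6 + 2 * k * (m + 1)\<close> k5 by linarith
  qed
  then show ?thesis
    using k5 by (cases m) (auto simp: algebra_simps)
qed

lemma threshold_bound_sqrt:
  fixes k m :: nat
  assumes k5: "k \<ge> 5" and "\<lceil>sqrt (2 * real k + 1/4) - 3/2\<rceil> \<le> int m + 1"
  shows "m \<ge> 1 \<and> 2 * (k - 1) < (m + 2) * (m + 3)"
proof -
  have "sqrt (2 * real k + 1/4) \<le> real m + 5/2"
    using assms(2) by (simp add: ceiling_le_iff)
  then have "2 * real k + 1/4 \<le> (real m + 5/2)\<^sup>2"
    by (metis real_le_rsqrt real_sqrt_le_iff sqrt_le_D)
  then have "real (8 * k) \<le> real (4 * (m * m) + 20 * m + 24)"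
    by (simp add: power2_eq_square algebra_simps)
  then have "8 * k \<le> 4 * (m * m) + 20 * m + 24"
    by (simp only: of_nat_le_iff)
  then show ?thesis
    using k5 by (cases m) (auto simp: algebra_simps)
qed

lemma threshold_bound:
  fixes k m :: nat
  assumes "k \<ge> 5"
    and "int m \<ge> min \<lceil>(real k + 2) * (real k - 3) / (2 * real k)\<rceil>
                      \<lceil>sqrt (2 * real k + 1/4) - 3/2\<rceil> - 1"
  shows "m \<ge> 1 \<and> 2 * (k - 1) < (m + 2) * (m + 3)"
  using assms threshold_bound_quadratic[of k m] threshold_bound_sqrt[of k m] by linarith

section \<open>The anticode construction\<close>

lemma sum_card_filter_swap:
  assumes "finite A" "finite C"
  shows "(\<Sum>x\<in>A. if P x then card {c\<in>C. x \<in> V c} else 0) = (\<Sum>c\<in>C. card {x\<in>A. P x \<and> x \<in> V c})"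
proof -
  have "(\<Sum>x\<in>A. if P x then card {c\<in>C. x \<in> V c} else 0) = (\<Sum>x\<in>A. \<Sum>c\<in>C. if P x \<and> x \<in> V c then 1 else 0)"
    using assms by (intro sum.cong) (auto simp: sum.If_cases Int_def)
  also have "\<dots> = (\<Sum>c\<in>C. \<Sum>x\<in>A. if P x \<and> x \<in> V c then 1 else 0)"
    by (rule sum.swap)
  also have "\<dots> = (\<Sum>c\<in>C. card {x\<in>A. P x \<and> x \<in> V c})"
    using assms by (intro sum.cong) (auto simp: sum.If_cases Int_def)
  finally show ?thesis .
qed

definition one_vec :: "nat \<Rightarrow> bool list" where
  "one_vec k = True # zeros (k - 1)"

lemma one_vec_in_vecs: "k \<ge> 1 \<Longrightarrow> one_vec k \<in> vecs k"
  by (simp add: one_vec_def vecs_def)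

lemma one_vec_neq_zeros: "one_vec k \<noteq> zeros k"
  by (cases k) (auto simp: one_vec_def)

lemma one_vec_notin_multiples:
  assumes "degree R \<ge> 1"
  shows "one_vec k \<notin> multiples k R"
proof
  have "poly_of_vec (one_vec k) = 1"
    by (rule poly_eqI) (auto simp: coeff_poly_of_vec one_vec_def nth_Cons' coeff_1)
  moreover assume "one_vec k \<in> multiples k R"
  ultimately have "is_unit R"
    by (simp add: multiples_def)
  with assms show False
    by (simp add: is_unit_iff_degree)
qed

text \<open>\<open>M\<close> copies of every nonzero column, minus the anticode consisting of \<open>one_vec k\<close> twice and
  the nonzero vectors of the subspaces \<open>multiples k (R c)\<close> of codimension \<open>c \<in> C\<close>; the remaining
  length is filled with zero columns.\<close>

context
  fixes k M :: nat and C :: "nat set" and R :: "nat \<Rightarrow> gf2 poly"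
  assumes k3: "k \<ge> 3" and M2: "M \<ge> 2" and C_sub: "C \<subseteq> {1..k-3}"
    and deg_R: "\<And>c. c \<in> C \<Longrightarrow> degree (R c) = c"
    and mult_le: "\<And>x. x \<in> vecs k \<Longrightarrow> x \<noteq> zeros k \<Longrightarrow> card {c\<in>C. x \<in> multiples k (R c)} \<le> M"
begin

definition anticode :: "bool list \<Rightarrow> nat" where
  "anticode x = (if x = one_vec k then 2 else 0) + card {c\<in>C. x \<in> multiples k (R c)}"

definition nonzero_columns :: nat where
  "nonzero_columns = (\<Sum>x\<in>vecs k - {zeros k}. M - anticode x)"

definition column_mult :: "nat \<Rightarrow> bool list \<Rightarrow> nat" where
  "column_mult N x = (if x = zeros k then N - nonzero_columns else M - anticode x)"

lemma finite_C: "finite C"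
  using C_sub finite_subset by blast

lemma card_multiples_R: "c \<in> C \<Longrightarrow> card (multiples k (R c)) = 2 ^ (k - c)"
  using deg_R C_sub k3 card_multiples[of "R c" k] by force

lemma anticode_le: "x \<in> vecs k - {zeros k} \<Longrightarrow> anticode x \<le> M"
proof -
  assume x: "x \<in> vecs k - {zeros k}"
  have "{c\<in>C. one_vec k \<in> multiples k (R c)} = {}"
    using one_vec_notin_multiples deg_R C_sub by fastforce
  then show ?thesis
    unfolding anticode_def using mult_le x M2 by (auto simp del: Collect_empty_eq)
qed

lemma sum_anticode:
  assumes "\<not> P (zeros k)"
  shows "(\<Sum>x\<in>vecs k - {zeros k}. if P x then anticode x else 0)
    = (if P (one_vec k) then 2 else 0) + (\<Sum>c\<in>C. card {x\<in>multiples k (R c). P x})"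
proof -
  let ?A = "vecs k - {zeros k}"
  have "one_vec k \<in> ?A"
    using one_vec_in_vecs one_vec_neq_zeros k3 by simp
  have "(\<Sum>x\<in>?A. if P x then anticode x else 0)
      = (\<Sum>x\<in>?A. (if x = one_vec k then (if P (one_vec k) then 2 else 0) else 0)
          + (if P x then card {c\<in>C. x \<in> multiples k (R c)} else 0))"
    by (intro sum.cong) (auto simp: anticode_def)
  also have "\<dots> = (if P (one_vec k) then 2 else 0)
      + (\<Sum>x\<in>?A. if P x then card {c\<in>C. x \<in> multiples k (R c)} else 0)"
    using \<open>one_vec k \<in> ?A\<close> by (simp add: sum.distrib)
  also have "(\<Sum>x\<in>?A. if P x then card {c\<in>C. x \<in> multiples k (R c)} else 0)
      = (\<Sum>c\<in>C. card {x\<in>?A. P x \<and> x \<in> multiples k (R c)})"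
    by (rule sum_card_filter_swap) (simp_all add: finite_C)
  also have "\<dots> = (\<Sum>c\<in>C. card {x\<in>multiples k (R c). P x})"
    using assms by (intro sum.cong arg_cong[where f = card]) (auto simp: multiples_def)
  finally show ?thesis .
qed

lemma sum_column_mult_anticode:
  assumes "\<not> P (zeros k)"
  shows "(\<Sum>x\<in>vecs k. if P x then column_mult N x else 0) + (if P (one_vec k) then 2 else 0)
    + (\<Sum>c\<in>C. card {x\<in>multiples k (R c). P x}) = M * card {x\<in>vecs k. P x}"
proof -
  let ?A = "vecs k - {zeros k}"
  have "(\<Sum>x\<in>vecs k. if P x then column_mult N x else 0) = (\<Sum>x\<in>?A. if P x then M - anticode x else 0)"
    using assms by (intro sum.mono_neutral_cong_right) (auto simp: column_mult_def)
  moreover have "(\<Sum>x\<in>?A. if P x then M - anticode x else 0) + (\<Sum>x\<in>?A. if P x then anticode x else 0)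
      = (\<Sum>x\<in>?A. if P x then M else 0)"
    by (subst sum.distrib[symmetric]) (intro sum.cong refl, use anticode_le in auto)
  moreover have "(\<Sum>x\<in>?A. if P x then M else 0) = M * card {x\<in>vecs k. P x}"
  proof -
    have "{x\<in>?A. P x} = {x\<in>vecs k. P x}"
      using assms by auto
    then show ?thesis
      by (simp add: sum.If_cases Int_def conj_commute)
  qed
  ultimately show ?thesis
    using sum_anticode[of P, OF assms] by linarith
qed

lemma length_identity: "nonzero_columns + 2 + (\<Sum>c\<in>C. 2 ^ (k - c) - 1) = M * (2 ^ k - 1)"
proof -
  have "(\<Sum>x\<in>vecs k. if x \<noteq> zeros k then column_mult 0 x else 0) = nonzero_columns"
    unfolding nonzero_columns_def by (intro sum.mono_neutral_cong_right) (auto simp: column_mult_def)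
  moreover have "card {x\<in>V. x \<noteq> zeros k} = card V - 1" if "bin_subspace k V" for V
  proof -
    have "{x\<in>V. x \<noteq> zeros k} = V - {zeros k}" by auto
    then show ?thesis
      using that bin_subspace_finite[OF that] unfolding bin_subspace_def by simp
  qed
  then have "card {x\<in>vecs k. x \<noteq> zeros k} = 2 ^ k - 1"
    and "(\<Sum>c\<in>C. card {x\<in>multiples k (R c). x \<noteq> zeros k}) = (\<Sum>c\<in>C. 2 ^ (k - c) - 1)"
    using bin_subspace_vecs bin_subspace_multiples card_multiples_R by simp_all
  ultimately show ?thesis
    using sum_column_mult_anticode[of "\<lambda>x. x \<noteq> zeros k" 0] one_vec_neq_zeros by simp
qed

lemma sum_column_mult: "nonzero_columns \<le> N \<Longrightarrow> (\<Sum>x\<in>vecs k. column_mult N x) = N"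
  using sum.remove[OF finite_vecs zeros_in_vecs, of "column_mult N"]
  unfolding nonzero_columns_def column_mult_def by simp

lemma wt_column_mult:
  assumes u: "u \<in> vecs k" "u \<noteq> zeros k"
  shows "M * 2 ^ (k - 1) \<le> (\<Sum>x\<in>vecs k. if dot u x then column_mult N x else 0) + 2 + (\<Sum>c\<in>C. 2 ^ (k - 1 - c))"
proof -
  have lu: "length u = k" using u by (simp add: vecs_def)
  have "card {x\<in>multiples k (R c). dot u x} \<le> 2 ^ (k - 1 - c)" if c: "c \<in> C" for c
  proof -
    have "c \<le> k - 3"
      using c C_sub by auto
    then have "k - c \<ge> 1"
      using k3 by linarith
    then show ?thesis
      using card_dot_cases[OF bin_subspace_multiples lu card_multiples_R[OF c]] by auto
  qed
  then have "(\<Sum>c\<in>C. card {x\<in>multiples k (R c). dot u x}) \<le> (\<Sum>c\<in>C. 2 ^ (k - 1 - c))"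
    by (rule sum_mono)
  then show ?thesis
    using sum_column_mult_anticode[of "dot u" N] card_dot_vecs[OF lu u(2)]
    by (simp split: if_splits)
qed

lemma even_column_mult_common:
  assumes u: "u \<in> vecs k" and v: "v \<in> vecs k"
  shows "even (\<Sum>x\<in>vecs k. if dot u x \<and> dot v x then column_mult N x else 0)"
proof -
  let ?P = "\<lambda>x. dot u x \<and> dot v x"
  have lu: "length u = k" and lv: "length v = k"
    using u v by (simp_all add: vecs_def)
  have "even (card {x\<in>multiples k (R c). ?P x})" if c: "c \<in> C" for c
    using even_card_dot_both[OF bin_subspace_multiples lu lv card_multiples_R[OF c]] c C_sub by force
  then have "even (\<Sum>c\<in>C. card {x\<in>multiples k (R c). ?P x})"
    by (intro dvd_sum) auto
  moreover have "even (card {x\<in>vecs k. ?P x})"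
    using even_card_dot_both[OF bin_subspace_vecs lu lv card_vecs] k3 by simp
  moreover have "(\<Sum>x\<in>vecs k. if ?P x then column_mult N x else 0) + (if ?P (one_vec k) then 2 else 0)
      + (\<Sum>c\<in>C. card {x\<in>multiples k (R c). ?P x}) = M * card {x\<in>vecs k. ?P x}"
    using sum_column_mult_anticode[of ?P N] by simp
  ultimately have "even ((\<Sum>x\<in>vecs k. if ?P x then column_mult N x else 0) + (if ?P (one_vec k) then 2 else 0)
      + (\<Sum>c\<in>C. card {x\<in>multiples k (R c). ?P x}))"
    by (simp only:) simp
  with \<open>even (\<Sum>c\<in>C. card {x\<in>multiples k (R c). ?P x})\<close> show ?thesis
    by (simp split: if_splits)
qed

lemma so_code_from_anticode:
  assumes "M * (2 ^ k - 1) \<le> N + 2 + (\<Sum>c\<in>C. 2 ^ (k - c) - 1)"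
    and "D + 2 + (\<Sum>c\<in>C. 2 ^ (k - 1 - c)) \<le> M * 2 ^ (k - 1)" and "D \<ge> 1"
  shows "\<exists>C'. so_code N k C' \<and> (\<forall>x\<in>C'. x \<noteq> zeros N \<longrightarrow> D \<le> wt x)"
proof -
  let ?f = "column_mult N"
  have "nonzero_columns \<le> N"
    using length_identity assms(1) by linarith
  then have len: "(\<Sum>x\<in>vecs k. ?f x) = N"
    by (rule sum_column_mult)
  have wt: "D \<le> wt (encode k ?f u)" if "u \<in> vecs k" "u \<noteq> zeros k" for u
    using wt_column_mult[OF that, of N] assms(2) by (simp add: wt_encode)
  have "wt (encode k ?f u) > 0" if "u \<in> vecs k" "u \<noteq> zeros k" for u
    using wt[OF that] assms(3) by linarith
  then have "lin_code N k (encode k ?f ` vecs k)"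
    by (rule lin_code_encode[OF len])
  moreover have "self_orth (encode k ?f ` vecs k)"
    unfolding self_orth_def using even_column_mult_common by (auto simp: orth_encode)
  moreover have "\<forall>x\<in>encode k ?f ` vecs k. x \<noteq> zeros N \<longrightarrow> D \<le> wt x"
    using wt encode_zeros[of k ?f] len by auto
  ultimately show ?thesis
    unfolding so_code_def by blast
qed

end

lemma so_code_from_excess:
  assumes k3: "k \<ge> 3" and M2: "M \<ge> 2" and M_large: "2 * (k - 1) < (M + 1) * (M + 2)"
    and s: "s mod 4 = 2" "s < 2 ^ (k - 1)"
    and N: "M * (2 ^ k - 1) < N + sum_div_pow2 k s"
    and D: "D \<ge> 1" "D + s \<le> M * 2 ^ (k - 1)"
  shows "\<exists>C. so_code N k C \<and> (\<forall>x\<in>C. x \<noteq> zeros N \<longrightarrow> D \<le> wt x)"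
proof -
  obtain C where C: "C \<subseteq> {1..k-3}" and s_eq: "s = 2 + (\<Sum>c\<in>C. 2 ^ (k - 1 - c))"
    and sum_div_eq: "sum_div_pow2 k s = 3 + (\<Sum>c\<in>C. 2 ^ (k - c) - 1)"
    using anticode_decomposition[OF s] by blast
  have "finite C" and "0 \<notin> C"
    using C finite_subset by auto
  define R where "R c = (SOME f :: gf2 poly. irreducible f \<and> degree f = c)" for c
  have R: "irreducible (R c) \<and> degree (R c) = c" if "c \<in> C" for c
  proof -
    have "c \<ge> 1" using that C by auto
    then show ?thesis
      unfolding R_def by (rule someI_ex[OF exists_irreducible_of_degree])
  qed
  have "card {c\<in>C. x \<in> multiples k (R c)} \<le> M" if "x \<in> vecs k" "x \<noteq> zeros k" for x
  proof (rule ccontr)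
    let ?t = "card {c\<in>C. x \<in> multiples k (R c)}"
    assume "\<not> ?t \<le> M"
    then have "(M + 1) * (M + 2) \<le> ?t * (?t + 1)"
      by (intro mult_le_mono) auto
    moreover have "?t * (?t + 1) \<le> 2 * (k - 1)"
      using card_multiples_containing[OF \<open>finite C\<close> \<open>0 \<notin> C\<close> R that] .
    ultimately show False
      using M_large by linarith
  qed
  then show ?thesis
    using so_code_from_anticode[OF k3 M2 C] R N D s_eq sum_div_eq by force
qed

lemma complement_mod_pow2:
  fixes d k :: nat
  assumes "k \<ge> 3" and "4 dvd d"
  obtains q s where "d + 2 + s = (q + 1) * 2 ^ (k - 1)" and "s mod 4 = 2" and "s < 2 ^ (k - 1)"
proof -
  define P :: nat where "P = 2 ^ (k - 1)"
  define q r where "q = (d + 2) div P" and "r = (d + 2) mod P"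
  define P' :: nat where "P' = 2 ^ (k - 3)"
  have "k - 1 = (k - 3) + 2"
    using assms(1) by simp
  then have P': "P = 4 * P'"
    unfolding P_def P'_def by (simp add: power_add)
  have "r < P" and d2: "d + 2 = q * P + r"
    unfolding P_def q_def r_def by (simp_all add: div_mult_mod_eq)
  have "r mod 4 = (d + 2) mod 4"
    unfolding r_def P' by (simp add: mod_mod_cancel)
  also have "\<dots> = 2"
    using \<open>4 dvd d\<close> by presburger
  finally obtain a where a: "r = 4 * a + 2"
    by (metis div_mult_mod_eq mult.commute)
  then have "a < P'"
    using \<open>r < P\<close> P' by linarith
  then obtain t where t: "P' = Suc (a + t)"
    using less_imp_Suc_add by blast
  have "d + 2 + (4 * t + 2) = (q + 1) * P"
    using d2 a t P' by simp
  moreover have "(4 * t + 2) mod 4 = (2::nat)"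
    by presburger
  moreover have "4 * t + 2 < P"
    using t P' by simp
  ultimately show ?thesis
    using that unfolding P_def by blast
qed

text \<open>For \<open>d + 2 + s = (q + 1) 2^(k-1)\<close> take \<open>M = m + q + 1\<close> copies of the simplex code.\<close>

lemma so_code_with_large_weights:
  assumes k5: "k \<ge> 5" and "4 dvd d" and m: "m \<ge> 1" "2 * (k - 1) < (m + 2) * (m + 3)"
    and N: "m * (2 ^ k - 1) + g k (d + 2) + 1 \<le> N"
  shows "\<exists>C. so_code N k C \<and> (\<forall>x\<in>C. x \<noteq> zeros N \<longrightarrow> m * 2 ^ (k - 1) + d + 2 \<le> wt x)"
proof -
  obtain q s where qs: "d + 2 + s = (q + 1) * 2 ^ (k - 1)" and s: "s mod 4 = 2" "s < 2 ^ (k - 1)"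
    by (rule complement_mod_pow2[of k d]) (use k5 \<open>4 dvd d\<close> in auto)
  define M where "M = m + q + 1"
  define T :: nat where "T = 2 ^ k - 1"
  have "d + 2 = q * 2 ^ (k - 1) + (2 ^ (k - 1) - s)"
    using qs s(2) by (simp add: algebra_simps)
  then have "g k (d + 2) = q * T + g k (2 ^ (k - 1) - s)"
    unfolding T_def by (simp only: g_add_mult_pow2)
  moreover have "g k (2 ^ (k - 1) - s) + sum_div_pow2 k s = T"
    using g_complement[of s k] s(2) unfolding T_def by simp
  moreover have "M * T = m * T + q * T + T"
    unfolding M_def by (simp add: algebra_simps)
  ultimately have "M * (2 ^ k - 1) < N + sum_div_pow2 k s"
    using N unfolding T_def[symmetric] by linarith
  moreover have "m * 2 ^ (k - 1) + d + 2 + s \<le> M * 2 ^ (k - 1)"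
    using qs unfolding M_def by (simp add: algebra_simps)
  moreover have "2 * (k - 1) < (M + 1) * (M + 2)"
    using m(2) mult_le_mono[of "m + 2" "M + 1" "m + 3" "M + 2"] unfolding M_def by simp
  ultimately show ?thesis
    using so_code_from_excess[of k M s N] k5 m(1) s unfolding M_def by simp
qed

lemma d_so_eqI:
  assumes C: "so_code N k C" and "k \<ge> 1" and wt: "\<forall>x\<in>C. x \<noteq> zeros N \<longrightarrow> D \<le> wt x"
    and "even D" and "N < g k (D + 2)"
  shows "d_so N k = D"
proof -
  have upper: "min_dist C' \<le> D" if "so_code N k C'" for C'
    using so_code_min_dist_le[OF that] assms(2,4,5) .
  have "min_dist C = D"
    using upper[OF C] min_dist_ge[OF _ \<open>k \<ge> 1\<close> wt] C by (simp add: so_code_def le_antisym)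
  then show ?thesis
    unfolding d_so_def using C upper
    by (intro Max_eqI) (auto intro: finite_subset[of _ "{..D}"])
qed

theorem theorem5p6:
  fixes k m d N :: nat
  assumes "k \<ge> 5" and "4 dvd d"
    and "int m \<ge> min \<lceil>(real k + 2) * (real k - 3) / (2 * real k)\<rceil>
                      \<lceil>sqrt (2 * real k + 1/4) - 3/2\<rceil> - 1"
    and "m * (2 ^ k - 1) + g k (d + 2) + 1 \<le> N"
    and "N \<le> m * (2 ^ k - 1) + g k (d + 4) - 1"
  shows "(\<exists>C. so_code N k C) \<and> d_so N k = m * 2 ^ (k - 1) + d + 2"
proof -
  define D where "D = m * 2 ^ (k - 1) + d + 2"
  have m: "m \<ge> 1" "2 * (k - 1) < (m + 2) * (m + 3)"
    using threshold_bound[OF assms(1,3)] by auto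
  obtain C where C: "so_code N k C" and wt: "\<forall>x\<in>C. x \<noteq> zeros N \<longrightarrow> D \<le> wt x"
    using so_code_with_large_weights[OF assms(1,2) m assms(4)] unfolding D_def by blast
  have "D + 2 = m * 2 ^ (k - 1) + (d + 4)"
    unfolding D_def by simp
  then have "g k (D + 2) = m * (2 ^ k - 1) + g k (d + 4)"
    by (simp only: g_add_mult_pow2)
  moreover have "d + 4 \<le> g k (d + 4)"
    using le_g[of k "d + 4"] assms(1) by simp
  ultimately have "N < g k (D + 2)"
    using assms(5) by linarith
  moreover have "even D"
    using assms(1,2) unfolding D_def by (simp add: dvd_trans[of 2 4 d])
  ultimately show ?thesis
    using d_so_eqI[OF C _ wt] C assms(1) unfolding D_def by auto
qed

end
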